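(* Let $I$ be a square-free monomial ideal of $S=K[x_1,\ldots,x_n]$ with minimal generating set $G(I)=\bigcup_{i=1}^kG_{d_i}$, where $G_{d_i}$ consists of the generators of degree $d_i$, and for $l\notin\{d_1,\ldots,d_k\}$ put $G_l=\emptyset$. Then $I$ is an $f$-ideal if and only if for each $l\in[n]$, $$|G_l|=\tfrac12\Big(C_n^l-\Big|\bigcup_{d_i>l}\sqcap^{d_i-l}(G_{d_i})\Big|-\Big|\bigcup_{d_i<l}\sqcup^{l-d_i}(G_{d_i})\Big|\Big).$$
   Context: $K$ is a field; $C_n^l$ is the binomial coefficient. For a set $A$ of square-free monomials, $\sqcup(A)=\{gx_i\mid g\in A,\ x_i\nmid g\}$ and $\sqcap(A)=\{h\ne1\mid h=g/x_i \text{ for some } g\in A,\ x_i\mid g\}$; $\sqcup^m,\sqcap^m$ are $m$-fold iterates. With $\sigma$ the bijection $x_{i_1}\cdots x_{i_k}\mapsto\{i_1,\ldots,i_k\}$, the facet complex $\delta_{\mathcal{F}}(I)$ has facets $\sigma(g)$, $g\in G(I)$, the Stanley–Reisner complex is $\delta_{\mathcal{N}}(I)=\{\sigma(g)\mid g\text{ square-free monomial},\ g\notin I\}$, and $I$ is an $f$-ideal if both complexes have the same $f$-vector. *)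

theory Defs
  imports Complex_Main
begin

(* A square-free monomial x_{i1}...x_{ik} of S = K[x_1..x_n] is identified with
   the set {i1,...,ik} (this is the bijection sigma). A square-free monomial
   ideal I is identified with the family of square-free monomials it contains,
   i.e. an upward-closed family of subsets of {1..n}. *)

definition sqfree_monomial_ideal :: "nat \<Rightarrow> nat set set \<Rightarrow> bool" where
  "sqfree_monomial_ideal n I \<longleftrightarrow> I \<subseteq> Pow {1..n} \<and>
     (\<forall>g\<in>I. \<forall>h. g \<subseteq> h \<and> h \<subseteq> {1..n} \<longrightarrow> h \<in> I)"

definition mingens :: "nat set set \<Rightarrow> nat set set" where
  "mingens I = {g \<in> I. \<forall>h\<in>I. h \<subseteq> g \<longrightarrow> h = g}"

definition gens_deg :: "nat set set \<Rightarrow> nat \<Rightarrow> nat set set" where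
  "gens_deg I l = {g \<in> mingens I. card g = l}"

definition facet_complex :: "nat set set \<Rightarrow> nat set set" where
  "facet_complex I = {F. \<exists>g\<in>mingens I. F \<subseteq> g}"

definition SR_complex :: "nat \<Rightarrow> nat set set \<Rightarrow> nat set set" where
  "SR_complex n I = {F. F \<subseteq> {1..n} \<and> F \<notin> I}"

definition fvec :: "nat set set \<Rightarrow> nat \<Rightarrow> nat" where
  "fvec D i = card {F \<in> D. card F = i + 1}"

definition f_ideal :: "nat \<Rightarrow> nat set set \<Rightarrow> bool" where
  "f_ideal n I \<longleftrightarrow> (\<forall>i<n. fvec (facet_complex I) i = fvec (SR_complex n I) i)"

definition sqcup :: "nat \<Rightarrow> nat set set \<Rightarrow> nat set set" where
  "sqcup n A = {insert i g | g i. g \<in> A \<and> i \<in> {1..n} \<and> i \<notin> g}"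

definition sqcap :: "nat set set \<Rightarrow> nat set set" where
  "sqcap A = {g - {i} | g i. g \<in> A \<and> i \<in> g \<and> g - {i} \<noteq> {}}"

definition gen_degrees :: "nat set set \<Rightarrow> nat set" where
  "gen_degrees I = card ` mingens I"

end

theory Submission
  imports Defs
begin

text \<open>A face of size l of the facet complex is either a generator of degree l or a proper
  subset of a generator of larger degree d, and iterating \<open>\<sqinter>\<close> (d - l) times on G_d yields
  exactly the l-subsets of generators of degree d. Dually, an l-subset of [n] is a non-face of
  the Stanley-Reisner complex iff it lies in I, i.e. it is a generator of degree l or a proper
  superset of a generator of smaller degree d, and iterating \<open>\<squnion>\<close> (l - d) times on G_d yields
  exactly the l-supersets of those. Both decompositions are disjoint because G(I) is an
  antichain, so f_{l-1} of the two complexes are |G_l| + |A_l| and C_n^l - |G_l| - |B_l|, where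
  A_l and B_l are the two unions in the formula; equating them gives the formula.\<close>

definition shadow :: "nat set set \<Rightarrow> nat \<Rightarrow> nat set set" where
  "shadow A m = {h. card h = m \<and> (\<exists>g\<in>A. h \<subseteq> g)}"

definition shade :: "nat \<Rightarrow> nat set set \<Rightarrow> nat \<Rightarrow> nat set set" where
  "shade n A m = {h. h \<subseteq> {1..n} \<and> card h = m \<and> (\<exists>g\<in>A. g \<subseteq> h)}"

lemma shadow_card_eq:
  assumes "\<forall>g\<in>A. finite g \<and> card g = d"
  shows "shadow A d = A"
  using assms by (auto simp: shadow_def) (metis card_subset_eq)

lemma shade_card_eq:
  assumes "\<forall>g\<in>A. g \<subseteq> {1..n} \<and> card g = d"
  shows "shade n A d = A"
  using assms by (auto simp: shade_def) (metis card_subset_eq finite_atLeastAtMost finite_subset)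

lemma sqcap_shadow:
  assumes "\<forall>g\<in>A. finite g \<and> Suc m \<le> card g" "m > 0"
  shows "sqcap (shadow A (Suc m)) = shadow A m"
proof (rule set_eqI, rule iffI)
  fix h assume "h \<in> sqcap (shadow A (Suc m))"
  then obtain h' i where h': "h = h' - {i}" "i \<in> h'" "card h' = Suc m" "\<exists>g\<in>A. h' \<subseteq> g"
    by (auto simp: sqcap_def shadow_def)
  then show "h \<in> shadow A m"
    by (auto simp: shadow_def card_Diff_singleton_if dest: card_ge_0_finite)
next
  fix h assume "h \<in> shadow A m"
  then obtain g where g: "g \<in> A" "h \<subseteq> g" "card h = m" by (auto simp: shadow_def)
  then have "finite g" "card h < card g" using assms(1) by auto
  then have "h \<noteq> g" by auto
  then obtain i where i: "i \<in> g" "i \<notin> h" using g(2) by blast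
  have "finite h" using \<open>finite g\<close> g(2) finite_subset by blast
  then have "insert i h \<in> shadow A (Suc m)" using g i by (auto simp: shadow_def)
  moreover have "h = insert i h - {i}" "h \<noteq> {}" using i g(3) assms(2) by auto
  ultimately show "h \<in> sqcap (shadow A (Suc m))" unfolding sqcap_def using i by blast
qed

lemma sqcup_shade:
  assumes "\<forall>g\<in>A. card g \<le> m"
  shows "sqcup n (shade n A m) = shade n A (Suc m)"
proof (rule set_eqI, rule iffI)
  fix h assume "h \<in> sqcup n (shade n A m)"
  then obtain h' i where h': "h = insert i h'" "i \<in> {1..n}" "i \<notin> h'" "h' \<subseteq> {1..n}"
    "card h' = m" "\<exists>g\<in>A. g \<subseteq> h'"
    by (auto simp: sqcup_def shade_def)
  then show "h \<in> shade n A (Suc m)"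
    by (auto simp: shade_def dest: finite_subset[OF _ finite_atLeastAtMost])
next
  fix h assume "h \<in> shade n A (Suc m)"
  then obtain g where g: "g \<in> A" "g \<subseteq> h" "h \<subseteq> {1..n}" "card h = Suc m"
    by (auto simp: shade_def)
  have "finite h" using g(3) finite_subset by blast
  have "h \<noteq> g" using g assms by auto
  then obtain i where i: "i \<in> h" "i \<notin> g" using g(2) by blast
  have "h - {i} \<in> shade n A m"
    using g i \<open>finite h\<close> by (auto simp: shade_def)
  moreover have "h = insert i (h - {i})" using i by auto
  ultimately show "h \<in> sqcup n (shade n A m)" unfolding sqcup_def using i g(3) by blast
qed

lemma sqcap_funpow_eq_shadow:
  assumes "\<forall>g\<in>A. finite g \<and> card g = d" "k < d"
  shows "(sqcap ^^ k) A = shadow A (d - k)"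
  using assms(2)
proof (induction k)
  case 0
  then show ?case using shadow_card_eq[OF assms(1)] by simp
next
  case (Suc k)
  have m: "d - k = Suc (d - Suc k)" "0 < d - Suc k" using Suc.prems by auto
  have "sqcap (shadow A (Suc (d - Suc k))) = shadow A (d - Suc k)"
    by (rule sqcap_shadow) (use assms(1) m in auto)
  then show ?case using Suc m by simp
qed

lemma sqcup_funpow_eq_shade:
  assumes "\<forall>g\<in>A. g \<subseteq> {1..n} \<and> card g = d"
  shows "(sqcup n ^^ k) A = shade n A (d + k)"
proof (induction k)
  case 0
  then show ?case using shade_card_eq[OF assms] by simp
next
  case (Suc k)
  then show ?case using sqcup_shade[of A "d + k" n] assms by simp
qed

lemma ex_mingens_subset:
  assumes "finite F" "F \<in> I"
  shows "\<exists>g\<in>mingens I. g \<subseteq> F"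
  using assms
proof (induction "card F" arbitrary: F rule: less_induct)
  case less
  show ?case
  proof (cases "F \<in> mingens I")
    case False
    then obtain h where h: "h \<in> I" "h \<subset> F" using less.prems unfolding mingens_def by auto
    then have "card h < card F" "finite h" using less.prems by (auto intro: psubset_card_mono finite_subset)
    then show ?thesis using less.hyps h by (meson order.trans psubset_imp_subset)
  qed auto
qed

definition proper_divisors_deg :: "nat set set \<Rightarrow> nat \<Rightarrow> nat set set" where
  "proper_divisors_deg I l = {F. card F = l \<and> (\<exists>g\<in>mingens I. l < card g \<and> F \<subseteq> g)}"

definition proper_multiples_deg :: "nat \<Rightarrow> nat set set \<Rightarrow> nat \<Rightarrow> nat set set" where
  "proper_multiples_deg n I l =
     {F. F \<subseteq> {1..n} \<and> card F = l \<and> (\<exists>g\<in>mingens I. card g < l \<and> g \<subseteq> F)}"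

lemma Union_sqcap_funpow_gens_deg:
  assumes "\<forall>g\<in>mingens I. finite g" "l > 0"
  shows "(\<Union>d\<in>{d \<in> gen_degrees I. d > l}. (sqcap ^^ (d - l)) (gens_deg I d))
           = proper_divisors_deg I l"
proof -
  have "(sqcap ^^ (d - l)) (gens_deg I d) = shadow (gens_deg I d) l" if "l < d" for d
    using sqcap_funpow_eq_shadow[of "gens_deg I d" d "d - l"] that assms
    by (simp add: gens_deg_def)
  then have "(\<Union>d\<in>{d \<in> gen_degrees I. d > l}. (sqcap ^^ (d - l)) (gens_deg I d))
      = (\<Union>d\<in>{d \<in> gen_degrees I. d > l}. shadow (gens_deg I d) l)"
    by simp
  also have "\<dots> = proper_divisors_deg I l"
    unfolding proper_divisors_deg_def shadow_def gens_deg_def gen_degrees_def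
    by (auto simp: image_iff) (metis less_imp_le_nat order_le_less_trans)
  finally show ?thesis .
qed

lemma Union_sqcup_funpow_gens_deg:
  assumes "\<forall>g\<in>mingens I. g \<subseteq> {1..n}"
  shows "(\<Union>d\<in>{d \<in> gen_degrees I. d < l}. (sqcup n ^^ (l - d)) (gens_deg I d))
           = proper_multiples_deg n I l"
proof -
  have "(sqcup n ^^ (l - d)) (gens_deg I d) = shade n (gens_deg I d) l" if "d < l" for d
    using sqcup_funpow_eq_shade[of "gens_deg I d" n d "l - d"] that assms
    by (simp add: gens_deg_def)
  then have "(\<Union>d\<in>{d \<in> gen_degrees I. d < l}. (sqcup n ^^ (l - d)) (gens_deg I d))
      = (\<Union>d\<in>{d \<in> gen_degrees I. d < l}. shade n (gens_deg I d) l)"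
    by simp
  also have "\<dots> = proper_multiples_deg n I l"
    unfolding proper_multiples_deg_def shade_def gens_deg_def gen_degrees_def
    by (auto simp: image_iff) (metis less_imp_le_nat order_le_less_trans)
  finally show ?thesis .
qed

lemma facet_complex_faces_of_card:
  assumes "\<forall>g\<in>mingens I. finite g"
  shows "{F \<in> facet_complex I. card F = l} = gens_deg I l \<union> proper_divisors_deg I l"
proof (rule set_eqI, rule iffI)
  fix F assume "F \<in> {F \<in> facet_complex I. card F = l}"
  then obtain g where g: "g \<in> mingens I" "F \<subseteq> g" "card F = l"
    unfolding facet_complex_def by auto
  have "finite g" using assms g(1) by blast
  show "F \<in> gens_deg I l \<union> proper_divisors_deg I l"
  proof (cases "card F = card g")
    case True
    then have "F = g" using \<open>finite g\<close> g(2) by (simp add: card_subset_eq)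
    then show ?thesis using g by (simp add: gens_deg_def)
  next
    case False
    moreover have "card F \<le> card g" using \<open>finite g\<close> g(2) by (rule card_mono)
    ultimately have "l < card g" using g(3) by linarith
    then show ?thesis using g by (auto simp: proper_divisors_deg_def)
  qed
qed (auto simp: gens_deg_def proper_divisors_deg_def facet_complex_def)

lemma ideal_elems_of_card:
  assumes "sqfree_monomial_ideal n I"
  shows "{F. F \<subseteq> {1..n} \<and> card F = l \<and> F \<in> I} = gens_deg I l \<union> proper_multiples_deg n I l"
proof (rule set_eqI, rule iffI)
  fix F assume F: "F \<in> {F. F \<subseteq> {1..n} \<and> card F = l \<and> F \<in> I}"
  then have "finite F" using finite_subset by blast
  with F obtain g where g: "g \<in> mingens I" "g \<subseteq> F"
    using ex_mingens_subset by blast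
  show "F \<in> gens_deg I l \<union> proper_multiples_deg n I l"
  proof (cases "card g = card F")
    case True
    then have "g = F" using \<open>finite F\<close> g(2) by (simp add: card_subset_eq)
    then show ?thesis using g F by (simp add: gens_deg_def)
  next
    case False
    moreover have "card g \<le> card F" using \<open>finite F\<close> g(2) by (rule card_mono)
    ultimately have "card g < l" using F by simp
    then show ?thesis using g F by (auto simp: proper_multiples_deg_def)
  qed
next
  have I: "I \<subseteq> Pow {1..n}" "\<And>g h. g \<in> I \<Longrightarrow> g \<subseteq> h \<Longrightarrow> h \<subseteq> {1..n} \<Longrightarrow> h \<in> I"
    using assms unfolding sqfree_monomial_ideal_def by blast+
  fix F assume "F \<in> gens_deg I l \<union> proper_multiples_deg n I l"
  then show "F \<in> {F. F \<subseteq> {1..n} \<and> card F = l \<and> F \<in> I}"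
    unfolding gens_deg_def proper_multiples_deg_def mingens_def using I by auto
qed

lemma gens_deg_Int_proper_divisors_deg: "gens_deg I l \<inter> proper_divisors_deg I l = {}"
  by (auto simp: gens_deg_def proper_divisors_deg_def mingens_def)

lemma gens_deg_Int_proper_multiples_deg: "gens_deg I l \<inter> proper_multiples_deg n I l = {}"
  by (auto simp: gens_deg_def proper_multiples_deg_def mingens_def)

lemma fvec_facet_complex:
  assumes "\<forall>g\<in>mingens I. g \<subseteq> {1..n}"
  shows "fvec (facet_complex I) l = card (gens_deg I (Suc l)) + card (proper_divisors_deg I (Suc l))"
proof -
  have "gens_deg I (Suc l) \<subseteq> Pow {1..n}" "proper_divisors_deg I (Suc l) \<subseteq> Pow {1..n}"
    using assms by (auto simp: gens_deg_def proper_divisors_deg_def)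
  then have "finite (gens_deg I (Suc l))" "finite (proper_divisors_deg I (Suc l))"
    by (auto intro: finite_subset)
  moreover have "\<forall>g\<in>mingens I. finite g" using assms finite_subset by blast
  ultimately show ?thesis
    unfolding fvec_def Suc_eq_plus1[symmetric]
    by (simp add: facet_complex_faces_of_card card_Un_disjoint gens_deg_Int_proper_divisors_deg)
qed

lemma fvec_SR_complex:
  assumes "sqfree_monomial_ideal n I"
  shows "fvec (SR_complex n I) l + card (gens_deg I (Suc l)) + card (proper_multiples_deg n I (Suc l))
           = n choose Suc l"
proof -
  let ?S = "{F. F \<subseteq> {1..n} \<and> card F = Suc l}"
  have "?S = {F \<in> SR_complex n I. card F = Suc l} \<union> {F. F \<subseteq> {1..n} \<and> card F = Suc l \<and> F \<in> I}"
    unfolding SR_complex_def by blast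
  moreover have "finite ?S" by simp
  ultimately have "card ?S = fvec (SR_complex n I) l
      + card (gens_deg I (Suc l) \<union> proper_multiples_deg n I (Suc l))"
    unfolding fvec_def Suc_eq_plus1[symmetric] ideal_elems_of_card[OF assms, symmetric]
    by (subst card_Un_disjoint[symmetric]) (auto simp: SR_complex_def intro: finite_subset)
  also have "card (gens_deg I (Suc l) \<union> proper_multiples_deg n I (Suc l))
      = card (gens_deg I (Suc l)) + card (proper_multiples_deg n I (Suc l))"
  proof (rule card_Un_disjoint)
    have "gens_deg I (Suc l) \<union> proper_multiples_deg n I (Suc l) \<subseteq> ?S"
      using ideal_elems_of_card[OF assms] by blast
    then show "finite (gens_deg I (Suc l))" "finite (proper_multiples_deg n I (Suc l))"
      using \<open>finite ?S\<close> by (auto intro: finite_subset)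
  qed (rule gens_deg_Int_proper_multiples_deg)
  finally show ?thesis using n_subsets[of "{1..n}" "Suc l"] by simp
qed

lemma f_ideal_iff_card_gens_deg:
  assumes "sqfree_monomial_ideal n I"
  shows "f_ideal n I \<longleftrightarrow> (\<forall>l\<in>{1..n}.
           2 * card (gens_deg I l) + card (proper_divisors_deg I l) + card (proper_multiples_deg n I l)
             = n choose l)"
proof -
  have gens: "\<forall>g\<in>mingens I. g \<subseteq> {1..n}"
    using assms by (auto simp: sqfree_monomial_ideal_def mingens_def)
  have "fvec (facet_complex I) i = fvec (SR_complex n I) i \<longleftrightarrow>
      2 * card (gens_deg I (Suc i)) + card (proper_divisors_deg I (Suc i))
        + card (proper_multiples_deg n I (Suc i)) = n choose Suc i" for i
    using fvec_facet_complex[OF gens, of i] fvec_SR_complex[OF assms, of i] by linarith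
  then show ?thesis
    unfolding f_ideal_def image_Suc_lessThan[symmetric] by auto
qed

theorem theorem6p3:
  fixes n :: nat and I :: "nat set set"
  assumes "sqfree_monomial_ideal n I"
  shows "f_ideal n I \<longleftrightarrow>
    (\<forall>l\<in>{1..n}.
       real (card (gens_deg I l)) =
         (real (n choose l)
          - real (card (\<Union>d\<in>{d \<in> gen_degrees I. d > l}. (sqcap ^^ (d - l)) (gens_deg I d)))
          - real (card (\<Union>d\<in>{d \<in> gen_degrees I. d < l}. (sqcup n ^^ (l - d)) (gens_deg I d)))) / 2)"
proof -
  have gens: "\<forall>g\<in>mingens I. g \<subseteq> {1..n}" "\<forall>g\<in>mingens I. finite g"
    using assms by (auto simp: sqfree_monomial_ideal_def mingens_def intro: finite_subset)
  have count: "2 * a + b + c = d \<longleftrightarrow> real a = (real d - real b - real c) / 2" for a b c d :: nat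
  proof -
    have "2 * a + b + c = d \<longleftrightarrow> real (2 * a + b + c) = real d"
      by (rule of_nat_eq_iff[symmetric])
    also have "\<dots> \<longleftrightarrow> real a = (real d - real b - real c) / 2"
      by (simp add: field_simps)
    finally show ?thesis .
  qed
  show ?thesis
    unfolding f_ideal_iff_card_gens_deg[OF assms] count
    using Union_sqcap_funpow_gens_deg[OF gens(2)] Union_sqcup_funpow_gens_deg[OF gens(1)]
    by (simp add: Suc_le_eq)
qed

end
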